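(* For every integer $b\ge 0$, \[ \operatorname{trace}(A_b)=p(b)+\sum_{i=0}^{b-1}2^{b-i-1}p(i), \] where $p(m)$ denotes the number of unordered partitions of $m$ (with $p(0)=1$).
   Context: For an integer $b\ge 0$, an ordered partition of $b$ is a finite sequence $(q_1,\ldots,q_k)$ of positive integers summing to $b$ (for $b=0$ the only one is the empty sequence). An ordered partition $(q_1,\ldots,q_k)$ with $k\ge1$ is nontrivially embedded into an ordered partition $(r_1,\ldots,r_\ell)$ by a choice of indices $1\le i_2<\cdots<i_k\le \ell$ with $q_j\le r_{i_j}$ for $2\le j\le k$; different index tuples count as different embeddings. A card for $b$ balls is either (i) a trivial card, given by an ordered partition $q$ of $b$, with left and right partitions both $q$; or (ii) a throw card, given by ordered partitions $q$ ($k\ge1$ parts) and $r$ of $b$ together with a nontrivial embedding of $q$ into $r$, with left partition $q$ and right partition $r$. Different index tuples give different cards, and a throw card is distinct from the trivial card even when $q=r$. $A_b$ is the square matrix with rows and columns indexed by the ordered partitions of $b$ whose $(u,v)$ entry is the number of cards for $b$ balls with left partition $u$ and right partition $v$. *)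

theory Defs
  imports Main "HOL-Library.Multiset"
begin

definition ordered_partitions :: "nat \<Rightarrow> nat list set" where
  "ordered_partitions b = {q. (\<forall>x\<in>set q. 0 < x) \<and> sum_list q = b}"

definition num_partitions :: "nat \<Rightarrow> nat" where
  "num_partitions m = card {M :: nat multiset. (\<forall>x\<in>#M. 0 < x) \<and> sum_mset M = m}"

text \<open>Nontrivial embeddings of q = (q_1,...,q_k), k \<ge> 1, into r = (r_1,...,r_l):
  index tuples i_2 < ... < i_k in {1..l} with q_j \<le> r_(i_j) for 2 \<le> j \<le> k.
  Encoded 0-based: the list is has length k-1, entry is!j (j < k-1) is the 0-based
  index i_(j+2) - 1, and the condition reads q!(j+1) \<le> r!(is!j).\<close>
definition nontrivial_embeddings :: "nat list \<Rightarrow> nat list \<Rightarrow> nat list set" where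
  "nontrivial_embeddings q r = {is. length is = length q - 1 \<and> sorted_wrt (<) is \<and>
      (\<forall>i\<in>set is. i < length r) \<and>
      (\<forall>j < length q - 1. q ! (j+1) \<le> r ! (is ! j))}"

datatype card = Trivial "nat list" | Throw "nat list" "nat list" "nat list"

fun left_part :: "card \<Rightarrow> nat list" where
  "left_part (Trivial q) = q"
| "left_part (Throw q r e) = q"

fun right_part :: "card \<Rightarrow> nat list" where
  "right_part (Trivial q) = q"
| "right_part (Throw q r e) = r"

definition cards :: "nat \<Rightarrow> card set" where
  "cards b = {Trivial q | q. q \<in> ordered_partitions b} \<union>
     {Throw q r e | q r e. q \<in> ordered_partitions b \<and> r \<in> ordered_partitions b \<and>
        q \<noteq> [] \<and> e \<in> nontrivial_embeddings q r}"

definition A :: "nat \<Rightarrow> nat list \<Rightarrow> nat list \<Rightarrow> nat" where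
  "A b u v = card {c \<in> cards b. left_part c = u \<and> right_part c = v}"

definition trace_A :: "nat \<Rightarrow> nat" where
  "trace_A b = (\<Sum>u\<in>ordered_partitions b. A b u u)"

end

theory Submission
  imports Defs
begin

text \<open>
  A throw card from \<open>u\<close> to itself is an embedding of \<open>u = (u\<^sub>0, \<dots>, u\<^sub>k\<^sub>-\<^sub>1)\<close>
  into itself; its index tuple misses exactly one position \<open>m\<close>, and it is valid iff
  \<open>u\<^sub>0 \<ge> u\<^sub>1 \<ge> \<dots> \<ge> u\<^sub>m\<close>.  Cutting \<open>u\<close> after this weakly decreasing prefix yields an
  unordered partition of some \<open>i \<ge> 1\<close> together with an arbitrary composition of \<open>b - i\<close>;
  there are \<open>2\<^sup>b\<^sup>-\<^sup>i\<^sup>-\<^sup>1\<close> of the latter (one if \<open>i = b\<close>).  The trivial cards contribute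
  the \<open>2\<^sup>b\<^sup>-\<^sup>1\<close> compositions of \<open>b\<close>, which is the term \<open>i = 0\<close>.
\<close>

lemma length_le_sum_list_pos: "\<forall>x\<in>set xs. 0 < (x::nat) \<Longrightarrow> length xs \<le> sum_list xs"
  by (induction xs) auto

lemma finite_ordered_partitions: "finite (ordered_partitions n)"
proof -
  have "ordered_partitions n \<subseteq> {xs. set xs \<subseteq> {..n} \<and> length xs \<le> n}"
    using length_le_sum_list_pos member_le_sum_list by (fastforce simp: ordered_partitions_def)
  then show ?thesis
    using finite_lists_length_le[of "{..n}" n] finite_subset by blast
qed

lemma ordered_partitions_0: "ordered_partitions 0 = {[]}"
  by (auto simp: ordered_partitions_def simp del: sum_list_eq_0_iff dest: length_le_sum_list_pos)

lemma ordered_partitions_1: "ordered_partitions 1 = {[1]}"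
proof -
  have "xs = [1]" if "xs \<in> ordered_partitions 1" for xs
  proof (cases xs)
    case (Cons a t)
    with that have "a = 1" "sum_list t = 0" "\<forall>x\<in>set t. 0 < x"
      by (auto simp: ordered_partitions_def simp del: sum_list_eq_0_iff)
    then show ?thesis
      using Cons length_le_sum_list_pos[of t] by (simp del: sum_list_eq_0_iff)
  qed (use that in \<open>simp add: ordered_partitions_def\<close>)
  then show ?thesis
    by (auto simp: ordered_partitions_def)
qed

fun inc_head :: "nat list \<Rightarrow> nat list" where
  "inc_head [] = []"
| "inc_head (x # xs) = Suc x # xs"

lemma ordered_partitions_Suc:
  assumes "0 < n"
  shows "ordered_partitions (Suc n) = Cons 1 ` ordered_partitions n \<union> inc_head ` ordered_partitions n"
proof
  show "ordered_partitions (Suc n) \<subseteq> Cons 1 ` ordered_partitions n \<union> inc_head ` ordered_partitions n"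
  proof
    fix xs assume xs: "xs \<in> ordered_partitions (Suc n)"
    then obtain a t where xs_eq: "xs = a # t" and "0 < a"
      by (cases xs) (auto simp: ordered_partitions_def)
    show "xs \<in> Cons 1 ` ordered_partitions n \<union> inc_head ` ordered_partitions n"
    proof (cases "a = 1")
      case True
      then have "t \<in> ordered_partitions n"
        using xs xs_eq by (auto simp: ordered_partitions_def)
      then show ?thesis
        using xs_eq True by auto
    next
      case False
      then obtain a' where "a = Suc a'" "0 < a'"
        using \<open>0 < a\<close> by (cases a) auto
      then have "a' # t \<in> ordered_partitions n" "xs = inc_head (a' # t)"
        using xs xs_eq by (auto simp: ordered_partitions_def)
      then show ?thesis
        by blast
    qed
  qed
next
  have "inc_head xs \<in> ordered_partitions (Suc n)" if "xs \<in> ordered_partitions n" for xs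
    using that assms by (cases xs) (auto simp: ordered_partitions_def)
  then show "Cons 1 ` ordered_partitions n \<union> inc_head ` ordered_partitions n \<subseteq> ordered_partitions (Suc n)"
    by (auto simp: ordered_partitions_def)
qed

lemma card_ordered_partitions_Suc:
  assumes "0 < n"
  shows "card (ordered_partitions (Suc n)) = 2 * card (ordered_partitions n)"
proof -
  have nonempty: "xs \<noteq> []" if "xs \<in> ordered_partitions n" for xs
    using that assms by (auto simp: ordered_partitions_def)
  have injective: "inj_on inc_head (ordered_partitions n)"
  proof (rule inj_onI)
    fix xs ys assume "xs \<in> ordered_partitions n" "ys \<in> ordered_partitions n" "inc_head xs = inc_head ys"
    then show "xs = ys"
      using nonempty by (cases xs; cases ys) auto
  qed
  have "1 # xs \<noteq> inc_head ys" if "ys \<in> ordered_partitions n" for xs ys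
    using that nonempty[OF that] by (cases ys) (auto simp: ordered_partitions_def)
  then have disjoint: "Cons 1 ` ordered_partitions n \<inter> inc_head ` ordered_partitions n = {}"
    by blast
  show ?thesis
    using finite_ordered_partitions injective disjoint
    by (simp add: ordered_partitions_Suc[OF assms] card_Un_disjoint card_image)
qed

lemma card_ordered_partitions:
  "card (ordered_partitions n) = (if n = 0 then 1 else 2 ^ (n - 1))"
proof (induction n)
  case (Suc n)
  show ?case
  proof (cases n)
    case 0
    then show ?thesis
      using ordered_partitions_1 by simp
  next
    case (Suc k)
    then show ?thesis
      using \<open>card (ordered_partitions n) = _\<close> card_ordered_partitions_Suc[of n] by simp
  qed
qed (simp add: ordered_partitions_0)

definition skip_index :: "nat \<Rightarrow> nat \<Rightarrow> nat list" where
  "skip_index m n = map (\<lambda>j. if j < m then j else Suc j) [0..<n]"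

lemma length_skip_index [simp]: "length (skip_index m n) = n"
  by (simp add: skip_index_def)

lemma nth_skip_index: "j < n \<Longrightarrow> skip_index m n ! j = (if j < m then j else Suc j)"
  by (simp add: skip_index_def)

lemma sorted_skip_index: "sorted_wrt (<) (skip_index m n)"
  by (auto simp: sorted_wrt_iff_nth_less nth_skip_index)

lemma set_skip_index:
  assumes "m \<le> n"
  shows "set (skip_index m n) = {..n} - {m}"
proof (intro equalityI subsetI)
  fix x assume "x \<in> set (skip_index m n)"
  then show "x \<in> {..n} - {m}"
    using assms by (auto simp: skip_index_def)
next
  fix x assume x: "x \<in> {..n} - {m}"
  show "x \<in> set (skip_index m n)"
  proof (cases "x < m")
    case True
    then have "x < n"
      using assms by simp
    then show ?thesis
      using True by (auto simp: skip_index_def intro: image_eqI[of _ _ x])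
  next
    case False
    then have "x - 1 < n" "\<not> x - 1 < m" "x = Suc (x - 1)"
      using x by auto
    then show ?thesis
      unfolding skip_index_def set_map by (intro image_eqI[of _ _ "x - 1"]) auto
  qed
qed

lemma inj_on_skip_index: "inj_on (\<lambda>m. skip_index m n) {..n}"
proof (rule inj_onI)
  fix m m' assume "m \<in> {..n}" "m' \<in> {..n}" "skip_index m n = skip_index m' n"
  then have "{..n} - {m} = {..n} - {m'}"
    by (metis atMost_iff set_skip_index)
  then show "m = m'"
    using \<open>m \<in> {..n}\<close> by blast
qed

lemma strict_sorted_obtain_skip_index:
  assumes "sorted_wrt (<) e" "length e = n" "set e \<subseteq> {..n}"
  obtains m where "m \<le> n" "e = skip_index m n"
proof -
  have "card (set e) = n"
    using assms(1,2) by (simp add: strict_sorted_iff distinct_card)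
  then have "card ({..n} - set e) = 1"
    using assms(3) by (simp add: card_Diff_subset)
  then obtain m where m: "{..n} - set e = {m}"
    using card_1_singletonE by blast
  then have "m \<le> n" "set e = set (skip_index m n)"
    using assms(3) set_skip_index[of m n] by auto
  then show ?thesis
    using that assms(1) sorted_skip_index sorted_distinct_set_unique
    by (metis strict_sorted_iff)
qed

lemma skip_index_self_embedding_iff:
  assumes "m < length u"
  shows "skip_index m (length u - 1) \<in> nontrivial_embeddings u u \<longleftrightarrow> (\<forall>j<m. u ! Suc j \<le> u ! j)"
proof -
  let ?e = "skip_index m (length u - 1)"
  have "\<forall>i\<in>set ?e. i < length u"
    using assms set_skip_index[of m "length u - 1"] by auto
  moreover have "(\<forall>j < length u - 1. u ! (j+1) \<le> u ! (?e ! j)) \<longleftrightarrow> (\<forall>j<m. u ! Suc j \<le> u ! j)"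
    using assms by (auto simp: nth_skip_index)
  ultimately show ?thesis
    using sorted_skip_index by (simp add: nontrivial_embeddings_def)
qed

lemma finite_nontrivial_embeddings: "finite (nontrivial_embeddings q r)"
proof -
  have "nontrivial_embeddings q r \<subseteq> {xs. set xs \<subseteq> {..<length r} \<and> length xs \<le> length q}"
    by (auto simp: nontrivial_embeddings_def)
  then show ?thesis
    using finite_lists_length_le[of "{..<length r}"] finite_subset by blast
qed

definition decreasing_prefix_ends :: "nat list \<Rightarrow> nat set" where
  "decreasing_prefix_ends u = {m. m < length u \<and> sorted (rev (take (Suc m) u))}"

lemma sorted_rev_iff_nth_Suc:
  "sorted (rev xs) \<longleftrightarrow> (\<forall>j. Suc j < length xs \<longrightarrow> xs ! Suc j \<le> (xs ! j :: nat))"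
proof -
  have "transp (\<lambda>a b :: nat. b \<le> a)"
    by (auto simp: transp_def)
  then show ?thesis
    by (simp add: sorted_wrt_rev sorted_wrt_iff_nth_Suc_transp)
qed

lemma sorted_rev_take_Suc_iff:
  fixes u :: "nat list"
  assumes "m < length u"
  shows "sorted (rev (take (Suc m) u)) \<longleftrightarrow> (\<forall>j<m. u ! Suc j \<le> u ! j)"
  unfolding sorted_rev_iff_nth_Suc using assms by auto

lemma self_embeddings_eq:
  assumes "u \<noteq> []"
  shows "nontrivial_embeddings u u = (\<lambda>m. skip_index m (length u - 1)) ` decreasing_prefix_ends u"
proof (intro equalityI subsetI)
  fix e assume e: "e \<in> nontrivial_embeddings u u"
  then have "sorted_wrt (<) e" "length e = length u - 1" "set e \<subseteq> {..length u - 1}"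
    by (auto simp: nontrivial_embeddings_def)
  then obtain m where "m \<le> length u - 1" "e = skip_index m (length u - 1)"
    by (rule strict_sorted_obtain_skip_index)
  moreover have "m < length u"
    using \<open>m \<le> length u - 1\<close> assms by (cases u) auto
  ultimately have "m \<in> decreasing_prefix_ends u"
    using e skip_index_self_embedding_iff[of m u] sorted_rev_take_Suc_iff[of m u]
    by (simp add: decreasing_prefix_ends_def)
  then show "e \<in> (\<lambda>m. skip_index m (length u - 1)) ` decreasing_prefix_ends u"
    using \<open>e = _\<close> by blast
next
  fix e assume "e \<in> (\<lambda>m. skip_index m (length u - 1)) ` decreasing_prefix_ends u"
  then obtain m where "e = skip_index m (length u - 1)" "m < length u"
    "sorted (rev (take (Suc m) u))"
    by (auto simp: decreasing_prefix_ends_def)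
  then show "e \<in> nontrivial_embeddings u u"
    using skip_index_self_embedding_iff[of m u] sorted_rev_take_Suc_iff[of m u] by simp
qed

lemma card_self_embeddings:
  assumes "u \<noteq> []"
  shows "card (nontrivial_embeddings u u) = card (decreasing_prefix_ends u)"
proof -
  have "inj_on (\<lambda>m. skip_index m (length u - 1)) (decreasing_prefix_ends u)"
    by (rule inj_on_subset[OF inj_on_skip_index]) (auto simp: decreasing_prefix_ends_def)
  then show ?thesis
    by (simp add: self_embeddings_eq[OF assms] card_image)
qed

lemma A_diagonal:
  assumes "u \<in> ordered_partitions b"
  shows "A b u u = Suc (card (decreasing_prefix_ends u))"
proof -
  let ?E = "{e \<in> nontrivial_embeddings u u. u \<noteq> []}"
  have "{c \<in> cards b. left_part c = u \<and> right_part c = u} = insert (Trivial u) (Throw u u ` ?E)"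
    using assms by (auto simp: cards_def)
  moreover have "card (Throw u u ` ?E) = card ?E"
    by (rule card_image) (auto simp: inj_on_def)
  moreover have "card ?E = card (decreasing_prefix_ends u)"
    using card_self_embeddings by (cases "u = []") (auto simp: decreasing_prefix_ends_def)
  moreover have "finite ?E"
    using finite_nontrivial_embeddings[of u u] by simp
  moreover have "Trivial u \<notin> Throw u u ` ?E"
    by blast
  ultimately show ?thesis
    by (simp add: A_def)
qed

lemma trace_A_eq:
  "trace_A b = card (ordered_partitions b) + (\<Sum>u\<in>ordered_partitions b. card (decreasing_prefix_ends u))"
  by (simp add: trace_A_def A_diagonal sum_Suc)

definition decreasing_compositions :: "nat \<Rightarrow> nat list set" where
  "decreasing_compositions i = {x \<in> ordered_partitions i. sorted (rev x)}"

lemma finite_decreasing_compositions: "finite (decreasing_compositions i)"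
  using finite_ordered_partitions[of i] by (simp add: decreasing_compositions_def)

lemma card_decreasing_compositions: "card (decreasing_compositions i) = num_partitions i"
proof -
  let ?P = "{M :: nat multiset. (\<forall>x\<in>#M. 0 < x) \<and> sum_mset M = i}"
  have "bij_betw mset (decreasing_compositions i) ?P"
  proof (rule bij_betw_byWitness[where f' = "\<lambda>M. rev (sorted_list_of_multiset M)"])
    show "\<forall>x\<in>decreasing_compositions i. rev (sorted_list_of_multiset (mset x)) = x"
      by (auto simp: decreasing_compositions_def intro!: properties_for_sort[THEN rev_swap[THEN iffD2]])
    show "\<forall>M\<in>?P. mset (rev (sorted_list_of_multiset M)) = M"
      by simp
    show "mset ` decreasing_compositions i \<subseteq> ?P"
      by (auto simp: decreasing_compositions_def ordered_partitions_def sum_mset_sum_list)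
    have "sum_list (sorted_list_of_multiset M) = sum_mset M" for M :: "nat multiset"
      by (metis mset_sorted_list_of_multiset sum_mset_sum_list)
    then show "(\<lambda>M. rev (sorted_list_of_multiset M)) ` ?P \<subseteq> decreasing_compositions i"
      by (auto simp: decreasing_compositions_def ordered_partitions_def)
  qed
  then show ?thesis
    unfolding num_partitions_def by (rule bij_betw_same_card)
qed

lemma num_partitions_0: "num_partitions 0 = 1"
proof -
  have "decreasing_compositions 0 = {[]}"
    by (auto simp: decreasing_compositions_def ordered_partitions_0)
  then show ?thesis
    using card_decreasing_compositions[of 0] by simp
qed

definition prefix_splits :: "nat \<Rightarrow> (nat list \<times> nat list) set" where
  "prefix_splits b = (\<Union>i\<in>{1..b}. decreasing_compositions i \<times> ordered_partitions (b - i))"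

lemma split_at_decreasing_prefix_end:
  assumes "u \<in> ordered_partitions b" "m \<in> decreasing_prefix_ends u"
  shows "(take (Suc m) u, drop (Suc m) u) \<in> prefix_splits b"
proof -
  let ?x = "take (Suc m) u" and ?y = "drop (Suc m) u"
  define i where "i = sum_list ?x"
  have u: "\<forall>a\<in>set u. 0 < a" "sum_list u = b"
    using assms(1) by (simp_all add: ordered_partitions_def)
  have m: "m < length u" "sorted (rev ?x)"
    using assms(2) by (simp_all add: decreasing_prefix_ends_def)
  have pos: "\<forall>a\<in>set ?x. 0 < a" "\<forall>a\<in>set ?y. 0 < a"
    using u(1) by (blast dest: in_set_takeD in_set_dropD)+
  have "i + sum_list ?y = b"
    unfolding i_def using u(2) sum_list_append[of ?x ?y] by simp
  moreover have "1 \<le> i"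
    unfolding i_def using m(1) length_le_sum_list_pos[OF pos(1)] by simp
  ultimately have "i \<in> {1..b}" "?x \<in> decreasing_compositions i" "?y \<in> ordered_partitions (b - i)"
    using m(2) pos by (auto simp: i_def decreasing_compositions_def ordered_partitions_def)
  then show ?thesis
    unfolding prefix_splits_def by blast
qed

lemma append_prefix_split:
  assumes "(x, y) \<in> prefix_splits b"
  shows "x \<noteq> []" "x @ y \<in> ordered_partitions b" "length x - 1 \<in> decreasing_prefix_ends (x @ y)"
proof -
  obtain i where i: "1 \<le> i" "i \<le> b" "x \<in> decreasing_compositions i" "y \<in> ordered_partitions (b - i)"
    using assms by (auto simp: prefix_splits_def)
  then show "x \<noteq> []"
    by (auto simp: decreasing_compositions_def ordered_partitions_def)
  then show "length x - 1 \<in> decreasing_prefix_ends (x @ y)"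
    using i(3) by (cases x) (simp_all add: decreasing_prefix_ends_def decreasing_compositions_def)
  show "x @ y \<in> ordered_partitions b"
    using i by (auto simp: decreasing_compositions_def ordered_partitions_def)
qed

lemma bij_betw_split_at_decreasing_prefix:
  "bij_betw (\<lambda>(u, m). (take (Suc m) u, drop (Suc m) u))
     (SIGMA u:ordered_partitions b. decreasing_prefix_ends u) (prefix_splits b)"
  (is "bij_betw ?split ?S _")
proof (rule bij_betw_byWitness[where f' = "\<lambda>(x, y). (x @ y, length x - 1)"])
  show "\<forall>a\<in>?S. (\<lambda>(x, y). (x @ y, length x - 1)) (?split a) = a"
    by (auto simp: decreasing_prefix_ends_def)
  show "\<forall>a\<in>prefix_splits b. ?split ((\<lambda>(x, y). (x @ y, length x - 1)) a) = a"
    using append_prefix_split(1) by auto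
  show "?split ` ?S \<subseteq> prefix_splits b"
    using split_at_decreasing_prefix_end by auto
  show "(\<lambda>(x, y). (x @ y, length x - 1)) ` prefix_splits b \<subseteq> ?S"
    using append_prefix_split(2,3) by auto
qed

lemma sum_card_decreasing_prefix_ends:
  "(\<Sum>u\<in>ordered_partitions b. card (decreasing_prefix_ends u))
     = (\<Sum>i=1..b. num_partitions i * card (ordered_partitions (b - i)))"
proof -
  have "(\<Sum>u\<in>ordered_partitions b. card (decreasing_prefix_ends u))
      = card (SIGMA u:ordered_partitions b. decreasing_prefix_ends u)"
    using finite_ordered_partitions by (simp add: decreasing_prefix_ends_def)
  also have "\<dots> = card (prefix_splits b)"
    using bij_betw_split_at_decreasing_prefix by (rule bij_betw_same_card)
  also have "\<dots> = (\<Sum>i=1..b. card (decreasing_compositions i \<times> ordered_partitions (b - i)))"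
  proof -
    have "(decreasing_compositions i \<times> ordered_partitions (b - i)) \<inter>
        (decreasing_compositions j \<times> ordered_partitions (b - j)) = {}" if "i \<noteq> j" for i j
      using that by (auto simp: decreasing_compositions_def ordered_partitions_def)
    then show ?thesis
      unfolding prefix_splits_def
      by (intro card_UN_disjoint) (auto simp: finite_decreasing_compositions finite_ordered_partitions)
  qed
  finally show ?thesis
    by (simp add: card_cartesian_product card_decreasing_compositions)
qed

theorem theorem10:
  fixes b :: nat
  shows "trace_A b = num_partitions b + (\<Sum>i<b. 2 ^ (b - i - 1) * num_partitions i)"
proof -
  have trace: "trace_A b = card (ordered_partitions b)
      + (\<Sum>i=1..b. num_partitions i * card (ordered_partitions (b - i)))"
    by (simp add: trace_A_eq sum_card_decreasing_prefix_ends)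
  show ?thesis
  proof (cases b)
    case 0
    then show ?thesis
      using trace by (simp add: ordered_partitions_0 num_partitions_0)
  next
    case (Suc n)
    have "(\<Sum>i=1..Suc n. num_partitions i * card (ordered_partitions (Suc n - i)))
        = num_partitions (Suc n) + (\<Sum>i=1..n. 2 ^ (n - i) * num_partitions i)"
      by (simp add: card_ordered_partitions mult.commute)
    moreover have "{..<Suc n} = insert 0 {1..n}"
      by auto
    ultimately show ?thesis
      using trace Suc by (simp add: card_ordered_partitions num_partitions_0)
  qed
qed

end
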